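(* Let $(\mathcal{X},\rho)$ be a totally bounded metric space and $\eta:\mathcal{X}\to\mathcal{Y}$ a function. There exists a sequence of instances $(X_n)_{n\ge0}$ in $\mathcal{X}$ on which the nearest neighbor rule is not online consistent on $\eta$ if and only if there is no positive separation between classes, i.e. \[\inf_{x,x'\in\mathcal{X}:\ \eta(x)\neq\eta(x')}\rho(x,x')=0.\]
   Context: For a deterministic sequence $(X_n)_{n\ge0}$, a nearest neighbor sequence is any $(\tilde X_n)_{n\ge1}$ with $\tilde X_n\in\arg\min_{x\in\{X_0,\dots,X_{n-1}\}}\rho(X_n,x)$. The nearest neighbor rule is online consistent on $\eta$ for the sequence if, for every such choice of nearest neighbors, $\limsup_{N\to\infty}\frac1N\sum_{n=1}^N\mathbb{1}\{\eta(X_n)\neq\eta(\tilde X_n)\}=0$. The infimum over the empty set is $+\infty$. *)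

theory Defs
  imports "HOL-Analysis.Analysis"
begin

definition nn_seq :: "(nat \<Rightarrow> 'a::metric_space) \<Rightarrow> (nat \<Rightarrow> 'a) \<Rightarrow> bool" where
  "nn_seq X Xt \<longleftrightarrow>
     (\<forall>n\<ge>1. Xt n \<in> X ` {..<n} \<and> (\<forall>k<n. dist (X n) (Xt n) \<le> dist (X n) (X k)))"

definition nn_err :: "('a \<Rightarrow> 'b) \<Rightarrow> (nat \<Rightarrow> 'a) \<Rightarrow> (nat \<Rightarrow> 'a) \<Rightarrow> nat \<Rightarrow> real" where
  "nn_err \<eta> X Xt N = (\<Sum>n=1..N. if \<eta> (X n) \<noteq> \<eta> (Xt n) then 1 else 0) / real N"

definition online_consistent :: "('a::metric_space \<Rightarrow> 'b) \<Rightarrow> (nat \<Rightarrow> 'a) \<Rightarrow> bool" where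
  "online_consistent \<eta> X \<longleftrightarrow>
     (\<forall>Xt. nn_seq X Xt \<longrightarrow> limsup (\<lambda>N. ereal (nn_err \<eta> X Xt N)) = 0)"

text \<open>Separation between classes; the infimum over the empty set is +\<infinity> in ereal.\<close>
definition class_separation :: "'a::metric_space set \<Rightarrow> ('a \<Rightarrow> 'b) \<Rightarrow> ereal" where
  "class_separation S \<eta> =
     Inf {ereal (dist x x') | x x'. x \<in> S \<and> x' \<in> S \<and> \<eta> x \<noteq> \<eta> x'}"

end

theory Submission
  imports Defs
begin

(* If differently labelled points of S are at least g > 0 apart, the rule can only err at a
   time n at which X n is at distance at least g from all earlier points; total boundedness
   allows only finitely many such times, so the error rate is O(1/N).
   Conversely, if the separation is 0, let P be the finite set of points shown so far and g > 0
   a lower bound for the distances of differently labelled points of P. Pick a, b in S with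
   different labels and dist a b < g/3. In one of the two orders, showing a and then b makes
   some nearest neighbour of the second point carry the other label: otherwise the nearest
   neighbours of b and of a would be points of P labelled like b and like a at distance
   at most 3 dist a b < g. Repeating this forever gives a possible mistake at every odd
   time, so the error rate stays at least 1/2. *)

lemma ereal_Inf_eq_0_iff:
  fixes D :: "ereal set"
  assumes "\<And>d. d \<in> D \<Longrightarrow> 0 \<le> d"
  shows "Inf D = 0 \<longleftrightarrow> (\<forall>g>0. \<exists>d\<in>D. d < ereal g)"
proof
  assume "Inf D = 0"
  then show "\<forall>g>0. \<exists>d\<in>D. d < ereal g"
    unfolding Inf_less_iff[symmetric] by (simp add: zero_ereal_def)
next
  assume "\<forall>g>0. \<exists>d\<in>D. d < ereal g"
  then have "Inf D \<le> 0 + ereal e" if "e > 0" for e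
    using that unfolding Inf_less_iff[symmetric] by (simp add: less_imp_le)
  then have "Inf D \<le> 0"
    by (rule ereal_le_epsilon2)
  moreover have "0 \<le> Inf D"
    using assms by (rule Inf_greatest)
  ultimately show "Inf D = 0"
    by (rule antisym)
qed

lemma class_separation_eq_0_iff:
  "class_separation S \<eta> = 0 \<longleftrightarrow>
     (\<forall>g>0. \<exists>x\<in>S. \<exists>x'\<in>S. \<eta> x \<noteq> \<eta> x' \<and> dist x x' < g)"
proof -
  have "(\<exists>d\<in>{ereal (dist x x') |x x'. x \<in> S \<and> x' \<in> S \<and> \<eta> x \<noteq> \<eta> x'}. d < ereal g) \<longleftrightarrow>
      (\<exists>x\<in>S. \<exists>x'\<in>S. \<eta> x \<noteq> \<eta> x' \<and> dist x x' < g)" for g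
    by fastforce
  then show ?thesis
    unfolding class_separation_def by (subst ereal_Inf_eq_0_iff) auto
qed

lemma class_separation_finite_neq_0:
  assumes "finite P"
  shows "class_separation P \<eta> \<noteq> 0"
proof -
  define D where "D = {ereal (dist x x') | x x'. x \<in> P \<and> x' \<in> P \<and> \<eta> x \<noteq> \<eta> x'}"
  have "D \<subseteq> (\<lambda>(x, x'). ereal (dist x x')) ` (P \<times> P)"
    unfolding D_def by auto
  then have "finite D"
    using assms by (meson finite_SigmaI finite_imageI finite_subset)
  have "0 \<notin> D"
    unfolding D_def by (auto simp: zero_ereal_def)
  have "Inf D \<noteq> 0"
  proof (cases "D = {}")
    case False
    with \<open>finite D\<close> have "Inf D \<in> D"
      by (metis cInf_eq_Min Min_in)
    with \<open>0 \<notin> D\<close> show ?thesis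
      by metis
  qed (simp add: top_ereal_def)
  then show ?thesis
    unfolding class_separation_def D_def .
qed

lemma totally_bounded_separated_finite:
  fixes S :: "'a::metric_space set"
  assumes "totally_bounded S" "T \<subseteq> S" "g > 0"
    and separated: "\<And>x y. x \<in> T \<Longrightarrow> y \<in> T \<Longrightarrow> x \<noteq> y \<Longrightarrow> g \<le> dist x y"
  shows "finite T"
proof -
  obtain K where "finite K" and cover: "S \<subseteq> (\<Union>c\<in>K. {y. dist c y < g/2})"
    using assms(1,3) unfolding totally_bounded_metric by (meson half_gt_zero)
  then have "\<forall>x\<in>T. \<exists>c\<in>K. dist c x < g/2"
    using assms(2) by blast
  then obtain center where center: "\<And>x. x \<in> T \<Longrightarrow> center x \<in> K \<and> dist (center x) x < g/2"
    by metis
  have "inj_on center T"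
  proof (rule inj_onI, rule ccontr)
    fix x y assume "x \<in> T" "y \<in> T" "center x = center y" "x \<noteq> y"
    have "dist x y \<le> dist (center x) x + dist (center y) y"
      using dist_triangle3[of x y "center x"] \<open>center x = center y\<close> by simp
    also have "\<dots> < g"
      using center[OF \<open>x \<in> T\<close>] center[OF \<open>y \<in> T\<close>] by simp
    finally show False
      using separated[OF \<open>x \<in> T\<close> \<open>y \<in> T\<close> \<open>x \<noteq> y\<close>] by simp
  qed
  moreover have "center ` T \<subseteq> K"
    using center by blast
  ultimately show ?thesis
    using \<open>finite K\<close> finite_imageD finite_subset by blast
qed

lemma finite_indices_far_from_past:
  fixes X :: "nat \<Rightarrow> 'a::metric_space"
  assumes "totally_bounded S" "range X \<subseteq> S" "g > 0"
  shows "finite {n. \<forall>k<n. g \<le> dist (X n) (X k)}" (is "finite ?N")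
proof -
  have far: "g \<le> dist (X m) (X n)" if "m \<in> ?N" "n \<in> ?N" "m \<noteq> n" for m n
  proof (cases "m < n")
    case True
    with \<open>n \<in> ?N\<close> show ?thesis
      by (simp add: dist_commute)
  next
    case False
    with \<open>m \<in> ?N\<close> \<open>m \<noteq> n\<close> show ?thesis
      by simp
  qed
  have "inj_on X ?N"
  proof (rule inj_onI, rule ccontr)
    fix m n assume "m \<in> ?N" "n \<in> ?N" "X m = X n" "m \<noteq> n"
    with far[of m n] \<open>g > 0\<close> show False
      by simp
  qed
  moreover have "finite (X ` ?N)"
  proof (rule totally_bounded_separated_finite[OF assms(1) _ assms(3)])
    show "X ` ?N \<subseteq> S"
      using assms(2) by blast
    show "g \<le> dist x y" if "x \<in> X ` ?N" "y \<in> X ` ?N" "x \<noteq> y" for x y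
      using that far by blast
  qed
  ultimately show ?thesis
    using finite_image_iff by blast
qed

lemma nn_err_eq_card:
  "nn_err \<eta> X Xt N = card {n \<in> {1..N}. \<eta> (X n) \<noteq> \<eta> (Xt n)} / N"
  unfolding nn_err_def by (simp add: sum.If_cases Int_def conj_commute conj_left_commute)

lemma limsup_nn_err_eq_0_if_finite_errors:
  assumes "finite {n. \<eta> (X n) \<noteq> \<eta> (Xt n)}" (is "finite ?E")
  shows "limsup (\<lambda>N. ereal (nn_err \<eta> X Xt N)) = 0"
proof -
  have "nn_err \<eta> X Xt N \<le> card ?E / N" for N
    unfolding nn_err_eq_card using assms
    by (intro divide_right_mono) (auto intro: card_mono)
  moreover have "0 \<le> nn_err \<eta> X Xt N" for N
    unfolding nn_err_eq_card by simp
  ultimately have "(\<lambda>N. nn_err \<eta> X Xt N) \<longlonglongrightarrow> 0"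
    by (intro real_tendsto_sandwich[OF _ _ tendsto_const lim_const_over_n[of "real (card ?E)"]])
      simp_all
  then show ?thesis
    by (simp add: lim_imp_Limsup tendsto_ereal zero_ereal_def)
qed

lemma online_consistent_if_class_separation_neq_0:
  assumes "totally_bounded S" "range X \<subseteq> S" "class_separation S \<eta> \<noteq> 0"
  shows "online_consistent \<eta> X"
  unfolding online_consistent_def
proof (intro allI impI)
  fix Xt assume nn: "nn_seq X Xt"
  obtain g where "g > 0" and sep: "\<And>x x'. x \<in> S \<Longrightarrow> x' \<in> S \<Longrightarrow> \<eta> x \<noteq> \<eta> x' \<Longrightarrow> g \<le> dist x x'"
    using assms(3) unfolding class_separation_eq_0_iff by (meson not_less)
  have errors_far_from_past: "{n. \<eta> (X n) \<noteq> \<eta> (Xt n)} \<subseteq> {n. \<forall>k<n. g \<le> dist (X n) (X k)}"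
  proof safe
    fix n k assume err: "\<eta> (X n) \<noteq> \<eta> (Xt n)" and "k < n"
    then have "Xt n \<in> X ` {..<n}" and closest: "dist (X n) (Xt n) \<le> dist (X n) (X k)"
      using nn unfolding nn_seq_def by auto
    then have "g \<le> dist (X n) (Xt n)"
      using assms(2) err by (intro sep) auto
    with closest show "g \<le> dist (X n) (X k)"
      by linarith
  qed
  show "limsup (\<lambda>N. ereal (nn_err \<eta> X Xt N)) = 0"
    using finite_subset[OF errors_far_from_past finite_indices_far_from_past[OF assms(1,2) \<open>g > 0\<close>]]
    by (rule limsup_nn_err_eq_0_if_finite_errors)
qed

lemma card_odd_atLeastAtMost: "card {n \<in> {1..N}. odd n} = (N + 1) div 2"
proof (induction N)
  case (Suc N)
  show ?case
  proof (cases "odd N")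
    case True
    then have "card {n \<in> {1..Suc N}. odd n} = card {n \<in> {1..N}. odd n}"
      by (intro arg_cong[where f=card]) (auto simp: le_Suc_eq)
    with Suc.IH True show ?thesis
      by presburger
  next
    case False
    then have "card {n \<in> {1..Suc N}. odd n} = card (insert (Suc N) {n \<in> {1..N}. odd n})"
      by (intro arg_cong[where f=card]) (auto simp: le_Suc_eq)
    also have "\<dots> = Suc (card {n \<in> {1..N}. odd n})"
      by (intro card_insert_disjoint) auto
    finally show ?thesis
      using Suc.IH False by presburger
  qed
qed simp

lemma limsup_nn_err_neq_0_if_odd_errors:
  assumes "\<And>n. odd n \<Longrightarrow> \<eta> (X n) \<noteq> \<eta> (Xt n)"
  shows "limsup (\<lambda>N. ereal (nn_err \<eta> X Xt N)) \<noteq> 0"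
proof -
  have "1/2 \<le> nn_err \<eta> X Xt N" if "N \<ge> 1" for N
  proof -
    have "(N + 1) div 2 \<le> card {n \<in> {1..N}. \<eta> (X n) \<noteq> \<eta> (Xt n)}"
      unfolding card_odd_atLeastAtMost[symmetric] using assms by (intro card_mono) auto
    then have "real N / 2 \<le> card {n \<in> {1..N}. \<eta> (X n) \<noteq> \<eta> (Xt n)}"
      by linarith
    with that show ?thesis
      unfolding nn_err_eq_card by (simp add: field_simps)
  qed
  then have "ereal (1/2) \<le> limsup (\<lambda>N. ereal (nn_err \<eta> X Xt N))"
    by (intro le_Limsup) (auto simp: eventually_sequentially)
  then show ?thesis
    by (auto simp: zero_ereal_def)
qed

definition nn_can_err :: "('a::metric_space \<Rightarrow> 'b) \<Rightarrow> (nat \<Rightarrow> 'a) \<Rightarrow> nat \<Rightarrow> bool" where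
  "nn_can_err \<eta> X n \<longleftrightarrow>
     (\<exists>q. is_arg_min (dist (X n)) (\<lambda>q. q \<in> X ` {..<n}) q \<and> \<eta> q \<noteq> \<eta> (X n))"

lemma not_online_consistent_if_nn_can_err_odd:
  assumes "\<And>n. odd n \<Longrightarrow> nn_can_err \<eta> X n"
  shows "\<not> online_consistent \<eta> X"
proof -
  let ?admissible = "\<lambda>n q. is_arg_min (dist (X n)) (\<lambda>q. q \<in> X ` {..<n}) q \<and>
    (odd n \<longrightarrow> \<eta> q \<noteq> \<eta> (X n))"
  have "\<forall>n. \<exists>q. n \<ge> 1 \<longrightarrow> ?admissible n q"
  proof
    fix n
    show "\<exists>q. n \<ge> 1 \<longrightarrow> ?admissible n q"
    proof (cases "odd n")
      case False
      show ?thesis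
      proof (cases "n = 0")
        case False
        then have "X ` {..<n} \<noteq> {}"
          by (auto simp: lessThan_empty_iff)
        then show ?thesis
          using ex_is_arg_min_if_finite[of "X ` {..<n}" "dist (X n)"] \<open>\<not> odd n\<close> by blast
      qed simp
    qed (use assms in \<open>auto simp: nn_can_err_def\<close>)
  qed
  then obtain Xt where Xt: "\<And>n. n \<ge> 1 \<Longrightarrow> ?admissible n (Xt n)"
    by (metis choice)
  have "nn_seq X Xt"
    unfolding nn_seq_def using Xt by (auto simp: is_arg_min_linorder)
  moreover have "limsup (\<lambda>N. ereal (nn_err \<eta> X Xt N)) \<noteq> 0"
  proof (rule limsup_nn_err_neq_0_if_odd_errors)
    fix n :: nat assume "odd n"
    then show "\<eta> (X n) \<noteq> \<eta> (Xt n)"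
      using Xt[of n] odd_pos by fastforce
  qed
  ultimately show ?thesis
    unfolding online_consistent_def by blast
qed

lemma exists_pair_with_mislabelled_nearest:
  fixes S P :: "'a::metric_space set"
  assumes "class_separation S \<eta> = 0" "finite P"
  shows "\<exists>a\<in>S. \<exists>b\<in>S. \<exists>q. is_arg_min (dist b) (\<lambda>q. q \<in> insert a P) q \<and> \<eta> q \<noteq> \<eta> b"
proof (rule ccontr)
  assume no_pair: "\<not> ?thesis"
  have nearest_same_label: "\<exists>p\<in>P. \<eta> p = \<eta> y \<and> dist y p \<le> dist y x"
    if "x \<in> S" "y \<in> S" "\<eta> x \<noteq> \<eta> y" for x y
  proof -
    obtain q where q: "is_arg_min (dist y) (\<lambda>q. q \<in> insert x P) q"
      using ex_is_arg_min_if_finite[of "insert x P" "dist y"] assms(2) by blast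
    then have "\<eta> q = \<eta> y"
      using no_pair that by blast
    moreover from q have "q \<in> insert x P" "dist y q \<le> dist y x"
      by (simp_all add: is_arg_min_linorder)
    ultimately show ?thesis
      using that(3) by auto
  qed
  obtain g where "g > 0" and separated_in_P:
    "\<And>p p'. p \<in> P \<Longrightarrow> p' \<in> P \<Longrightarrow> \<eta> p \<noteq> \<eta> p' \<Longrightarrow> g \<le> dist p p'"
    using class_separation_finite_neq_0[OF assms(2)] unfolding class_separation_eq_0_iff
    by (meson not_less)
  obtain a b where "a \<in> S" "b \<in> S" "\<eta> a \<noteq> \<eta> b" "dist a b < g/3"
    using assms(1) \<open>g > 0\<close> unfolding class_separation_eq_0_iff
    by (metis divide_pos_pos zero_less_numeral)
  obtain p where p: "p \<in> P" "\<eta> p = \<eta> b" "dist b p \<le> dist b a"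
    using nearest_same_label[OF \<open>a \<in> S\<close> \<open>b \<in> S\<close> \<open>\<eta> a \<noteq> \<eta> b\<close>] by blast
  obtain p' where p': "p' \<in> P" "\<eta> p' = \<eta> a" "dist a p' \<le> dist a b"
    using nearest_same_label[OF \<open>b \<in> S\<close> \<open>a \<in> S\<close>] \<open>\<eta> a \<noteq> \<eta> b\<close> by metis
  have "dist p p' \<le> dist p b + dist b a + dist a p'"
    using dist_triangle[of p p' b] dist_triangle[of b p' a] by linarith
  also have "\<dots> \<le> 3 * dist a b"
    using p(3) p'(3) by (simp add: dist_commute)
  also have "\<dots> < g"
    using \<open>dist a b < g/3\<close> by simp
  finally show False
    using separated_in_P[OF p(1) p'(1)] p(2) p'(2) \<open>\<eta> a \<noteq> \<eta> b\<close> by simp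
qed

primrec presented_points :: "('a set \<Rightarrow> 'a \<times> 'a) \<Rightarrow> nat \<Rightarrow> 'a set" where
  "presented_points F 0 = {}"
| "presented_points F (Suc k) =
     presented_points F k \<union> {fst (F (presented_points F k)), snd (F (presented_points F k))}"

definition pair_seq :: "('a set \<Rightarrow> 'a \<times> 'a) \<Rightarrow> nat \<Rightarrow> 'a" where
  "pair_seq F n = (if even n then fst else snd) (F (presented_points F (n div 2)))"

lemma pair_seq_even: "pair_seq F (2 * k) = fst (F (presented_points F k))"
  by (simp add: pair_seq_def)

lemma pair_seq_odd: "pair_seq F (Suc (2 * k)) = snd (F (presented_points F k))"
  by (simp add: pair_seq_def)

lemma image_pair_seq_lessThan: "pair_seq F ` {..<2 * k} = presented_points F k"
proof (induction k)
  case (Suc k)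
  have "{..<2 * Suc k} = insert (Suc (2 * k)) (insert (2 * k) {..<2 * k})"
    by auto
  then show ?case
    using Suc.IH by (simp add: pair_seq_even pair_seq_odd insert_commute)
qed simp

lemma finite_presented_points: "finite (presented_points F k)"
  by (induction k) simp_all

lemma exists_seq_nn_can_err_odd:
  fixes S :: "'a::metric_space set"
  assumes "class_separation S \<eta> = 0"
  shows "\<exists>X. range X \<subseteq> S \<and> (\<forall>n. odd n \<longrightarrow> nn_can_err \<eta> X n)"
proof -
  let ?good_pair = "\<lambda>P ab. fst ab \<in> S \<and> snd ab \<in> S \<and>
    (\<exists>q. is_arg_min (dist (snd ab)) (\<lambda>q. q \<in> insert (fst ab) P) q \<and> \<eta> q \<noteq> \<eta> (snd ab))"
  have "\<forall>P. \<exists>ab. finite P \<longrightarrow> ?good_pair P ab"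
  proof
    fix P :: "'a set"
    show "\<exists>ab. finite P \<longrightarrow> ?good_pair P ab"
    proof (cases "finite P")
      case True
      then obtain a b where "a \<in> S" "b \<in> S"
        "\<exists>q. is_arg_min (dist b) (\<lambda>q. q \<in> insert a P) q \<and> \<eta> q \<noteq> \<eta> b"
        using exists_pair_with_mislabelled_nearest[OF assms True] by blast
      then show ?thesis
        by (intro exI[of _ "(a, b)"]) simp
    qed simp
  qed
  then obtain F where F: "\<And>P. finite P \<Longrightarrow> ?good_pair P (F P)"
    by (metis choice)
  show ?thesis
  proof (intro exI[of _ "pair_seq F"] conjI allI impI)
    show "range (pair_seq F) \<subseteq> S"
    proof
      fix x assume "x \<in> range (pair_seq F)"
      then obtain n where "x = pair_seq F n"
        by blast
      then show "x \<in> S"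
        using F[OF finite_presented_points[of F "n div 2"]] by (simp add: pair_seq_def)
    qed
  next
    fix n :: nat assume "odd n"
    then obtain k where n: "n = Suc (2 * k)"
      using oddE by fastforce
    have "pair_seq F ` {..<n} = insert (fst (F (presented_points F k))) (presented_points F k)"
      unfolding n lessThan_Suc by (simp add: image_pair_seq_lessThan pair_seq_even)
    then show "nn_can_err \<eta> (pair_seq F) n"
      using F[OF finite_presented_points] by (simp add: nn_can_err_def n pair_seq_odd)
  qed
qed

theorem proposition1:
  fixes S :: "'a::metric_space set" and \<eta> :: "'a \<Rightarrow> 'b"
  assumes "totally_bounded S"
  shows "(\<exists>X. range X \<subseteq> S \<and> \<not> online_consistent \<eta> X) \<longleftrightarrow> class_separation S \<eta> = 0"
proof
  assume "\<exists>X. range X \<subseteq> S \<and> \<not> online_consistent \<eta> X"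
  then show "class_separation S \<eta> = 0"
    using online_consistent_if_class_separation_neq_0[OF assms] by blast
next
  assume "class_separation S \<eta> = 0"
  then show "\<exists>X. range X \<subseteq> S \<and> \<not> online_consistent \<eta> X"
    using exists_seq_nn_can_err_odd not_online_consistent_if_nn_can_err_odd by metis
qed

end
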